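(* Suppose $X$ has a $\chi^2$ distribution with $\ell$ degrees of freedom, where $\ell\ge3$. Then for every $0<t<\ell-2$, \[ P(X\le t)\le P(X\ge 2\ell-4-t). \] *)

theory Defs
  imports "HOL-Probability.Probability"
begin

definition chi_squared_density :: "nat \<Rightarrow> real \<Rightarrow> real" where
  "chi_squared_density k x =
     (if x > 0 then x powr (real k / 2 - 1) * exp (- x / 2) / (2 powr (real k / 2) * Gamma (real k / 2))
      else 0)"

end

theory Submission
  imports Defs
begin

text \<open>The chi-squared density with \<open>\<ell>\<close> degrees of freedom is proportional to
  \<open>x\<^sup>m\<^sup>/\<^sup>2 e\<^sup>-\<^sup>x\<^sup>/\<^sup>2\<close> with \<open>m = \<ell> - 2\<close>, whose mode is \<open>m\<close>.  Comparing logarithms, the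
  density at a point \<open>x \<in> (0, m]\<close> left of the mode is at most the density at its mirror
  image \<open>2m - x\<close>: the difference \<open>m/2 (ln (2m - y) - ln y) - (m - y)\<close> vanishes at \<open>y = m\<close>
  and is nonincreasing, since by AM-GM \<open>y (2m - y) \<le> m\<^sup>2\<close>.  Reflecting the lower tail
  \<open>{X \<le> t}\<close> in the mode therefore gives an integral dominated by that of the upper tail
  \<open>{X \<ge> 2m - t}\<close>.\<close>

lemma log_reflection_gap_nonneg:
  fixes m x :: real
  assumes "0 < x" "x \<le> m"
  shows "0 \<le> (m/2) * (ln (2*m - x) - ln x) - (m - x)"
proof -
  let ?h = "\<lambda>y::real. (m/2) * (ln (2*m - y) - ln y) - (m - y)"
  have "?h m \<le> ?h x"
  proof (rule DERIV_nonpos_imp_nonincreasing[OF assms(2)])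
    fix y assume y: "x \<le> y" "y \<le> m"
    have pos: "0 < y" "0 < 2*m - y" using y assms by auto
    have deriv: "DERIV ?h y :> 1 - m*m / (y * (2*m - y))"
      using pos by (auto intro!: derivative_eq_intros simp: field_simps)
    have "y * (2*m - y) \<le> m*m"
      using zero_le_power2[of "m - y"] by (simp add: power2_eq_square algebra_simps)
    then have "1 - m*m / (y * (2*m - y)) \<le> 0"
      using pos by (simp add: field_simps)
    then show "\<exists>d. DERIV ?h y :> d \<and> d \<le> 0" using deriv by blast
  qed
  then show ?thesis by simp
qed

lemma powr_exp_le_reflect_mode:
  fixes m x :: real
  assumes "0 < x" "x \<le> m"
  shows "x powr (m/2) * exp (- x/2) \<le> (2*m - x) powr (m/2) * exp (- (2*m - x)/2)"
proof -
  have "x powr (m/2) * exp (- x/2) = exp ((m/2) * ln x - x/2)"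
    using assms by (simp add: powr_def exp_add[symmetric] algebra_simps)
  also have "\<dots> \<le> exp ((m/2) * ln (2*m - x) - (2*m - x)/2)"
    using log_reflection_gap_nonneg[OF assms] by (simp add: field_simps)
  also have "\<dots> = (2*m - x) powr (m/2) * exp (- (2*m - x)/2)"
    using assms by (simp add: powr_def exp_add[symmetric] algebra_simps diff_divide_distrib)
  finally show ?thesis .
qed

lemma chi_squared_density_le_reflect:
  fixes l :: nat and x :: real
  assumes "0 < x" "x \<le> real l - 2"
  shows "chi_squared_density l x \<le> chi_squared_density l (2 * (real l - 2) - x)"
proof -
  have exponent: "real l / 2 - 1 = (real l - 2) / 2" by simp
  have "0 < 2 powr (real l / 2) * Gamma (real l / 2)"
    using assms by (intro mult_pos_pos Gamma_real_pos) auto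
  then show ?thesis
    using assms powr_exp_le_reflect_mode[OF assms]
    unfolding chi_squared_density_def exponent by (simp add: divide_right_mono)
qed

lemma nn_integral_upper_tail_reflect:
  fixes f :: "real \<Rightarrow> ennreal" and c a :: real
  assumes [measurable]: "f \<in> borel_measurable borel"
  shows "(\<integral>\<^sup>+x. f x * indicator {2*c - a..} x \<partial>lborel)
       = (\<integral>\<^sup>+x. f (2*c - x) * indicator {..a} x \<partial>lborel)"
proof -
  have "(\<integral>\<^sup>+x. f x * indicator {2*c - a..} x \<partial>lborel)
      = ennreal \<bar>-1\<bar> * (\<integral>\<^sup>+x. f (2*c + (-1) * x) * indicator {2*c - a..} (2*c + (-1) * x) \<partial>lborel)"
    by (rule nn_integral_real_affine) auto
  also have "\<dots> = (\<integral>\<^sup>+x. f (2*c - x) * indicator {..a} x \<partial>lborel)"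
    by (auto intro!: nn_integral_cong split: split_indicator)
  finally show ?thesis .
qed

lemma (in prob_space) prob_le_reflected_upper_tail:
  fixes X :: "'a \<Rightarrow> real" and f :: "real \<Rightarrow> ennreal"
  assumes dist: "distributed M lborel X f"
    and dominated: "\<And>x. x \<le> t \<Longrightarrow> f x \<le> f (2*c - x)"
  shows "prob {\<omega> \<in> space M. X \<omega> \<le> t} \<le> prob {\<omega> \<in> space M. 2*c - t \<le> X \<omega>}"
proof -
  have [measurable]: "f \<in> borel_measurable borel"
    using distributed_borel_measurable[OF dist] by simp
  have tail: "emeasure M {\<omega> \<in> space M. X \<omega> \<in> A} = (\<integral>\<^sup>+x. f x * indicator A x \<partial>lborel)"
    if "A \<in> sets borel" for A
    using distributed_emeasure[OF dist, of A] that by (simp add: vimage_def Int_def conj_commute)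
  have "emeasure M {\<omega> \<in> space M. X \<omega> \<le> t} = (\<integral>\<^sup>+x. f x * indicator {..t} x \<partial>lborel)"
    using tail[of "{..t}"] by simp
  also have "\<dots> \<le> (\<integral>\<^sup>+x. f (2*c - x) * indicator {..t} x \<partial>lborel)"
    using dominated by (intro nn_integral_mono) (simp split: split_indicator)
  also have "\<dots> = (\<integral>\<^sup>+x. f x * indicator {2*c - t..} x \<partial>lborel)"
    by (rule nn_integral_upper_tail_reflect[symmetric]) measurable
  also have "\<dots> = emeasure M {\<omega> \<in> space M. 2*c - t \<le> X \<omega>}"
    using tail[of "{2*c - t..}"] by simp
  finally show ?thesis
    unfolding measure_def by (rule enn2real_mono) (simp add: less_top[symmetric])
qed

theorem lemma2:
  fixes M :: "'a measure" and X :: "'a \<Rightarrow> real" and l :: nat and t :: real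
  assumes "prob_space M"
    and "distributed M lborel X (\<lambda>x. ennreal (chi_squared_density l x))"
    and "l \<ge> 3"
    and "0 < t" and "t < real l - 2"
  shows "measure M {\<omega> \<in> space M. X \<omega> \<le> t}
           \<le> measure M {\<omega> \<in> space M. X \<omega> \<ge> 2 * real l - 4 - t}"
proof -
  interpret prob_space M by fact
  have "ennreal (chi_squared_density l x) \<le> ennreal (chi_squared_density l (2 * (real l - 2) - x))"
    if "x \<le> t" for x
  proof (cases "0 < x")
    case True
    then show ?thesis
      using chi_squared_density_le_reflect[of x l] that assms(5) by (simp add: ennreal_leI)
  qed (simp add: chi_squared_density_def)
  from prob_le_reflected_upper_tail[OF assms(2) this]
  show ?thesis by (simp add: algebra_simps)
qed

end
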